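(* Let $k,\ell\geq t+2$ and $n\geq L(\max\{k,\ell\},t)$. If $\mathcal{F}\subseteq\Pi(n,k)$ and $\mathcal{G}\subseteq\Pi(n,\ell)$ are nonempty cross $t$-intersecting families, then $$|\mathcal{F}||\mathcal{G}|\leq g(\tau_t(\mathcal{G}),k,\ell,t,n)\,g(\tau_t(\mathcal{F}),\ell,k,t,n).$$
   Context: $[n]=\{1,\ldots,n\}$. A partition is a set of pairwise disjoint nonempty sets (blocks). $\Pi(n,k)$ is the set of partitions of $[n]$ into $k$ blocks and $S(n,k)=|\Pi(n,k)|$. $\mathcal{F},\mathcal{G}$ are cross $t$-intersecting if every $F\in\mathcal{F}$ and $G\in\mathcal{G}$ share at least $t$ blocks. A $t$-cover of a family $\mathcal{P}$ of partitions is a partition sharing at least $t$ blocks with each member of $\mathcal{P}$; $\tau_t(\mathcal{P})$ is the minimal number of blocks of a $t$-cover (so here $t\leq\tau_t(\mathcal{G})\leq k$, $t\leq\tau_t(\mathcal{F})\leq\ell$). $L(k,t):=(t+1)+(k-t+1)\log_2((t+1)(k-t+1))$. For $t\leq m\leq k$: $f(m,k,\ell,t,n)=(\ell-t+1)^{m-t}\binom{m}{t}S(n-m,k-m)$ if $m\leq k-1$ and $f(k,k,\ell,t,n)=(\ell-t+1)^{k-t}\binom{k}{t}$; $g(m,k,\ell,t,n)=\max\{f(m,k,\ell,t,n),f(k,k,\ell,t,n)\}$. *)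

theory Defs
  imports Complex_Main "HOL-Library.Disjoint_Sets"
begin

definition is_partition :: "nat set set \<Rightarrow> bool" where
  "is_partition P \<longleftrightarrow> disjoint P \<and> {} \<notin> P \<and> finite P"

definition Pi_nk :: "nat \<Rightarrow> nat \<Rightarrow> nat set set set" where
  "Pi_nk n k = {P. partition_on {1..n} P \<and> card P = k}"

definition S2 :: "nat \<Rightarrow> nat \<Rightarrow> nat" where
  "S2 n k = card (Pi_nk n k)"

definition cross_t_intersecting :: "nat \<Rightarrow> nat set set set \<Rightarrow> nat set set set \<Rightarrow> bool" where
  "cross_t_intersecting t F G \<longleftrightarrow> (\<forall>A\<in>F. \<forall>B\<in>G. card (A \<inter> B) \<ge> t)"

definition is_t_cover :: "nat \<Rightarrow> nat \<Rightarrow> nat set set set \<Rightarrow> nat set set \<Rightarrow> bool" where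
  "is_t_cover n t PP T \<longleftrightarrow> is_partition T \<and> \<Union>T \<subseteq> {1..n} \<and>
     (\<forall>P\<in>PP. card (T \<inter> P) \<ge> t)"

definition tau :: "nat \<Rightarrow> nat \<Rightarrow> nat set set set \<Rightarrow> nat" where
  "tau n t PP = (LEAST m. \<exists>T. is_t_cover n t PP T \<and> card T = m)"

definition L :: "nat \<Rightarrow> nat \<Rightarrow> real" where
  "L k t = real (t + 1) + real (k - t + 1) * log 2 (real ((t + 1) * (k - t + 1)))"

definition f_bound :: "nat \<Rightarrow> nat \<Rightarrow> nat \<Rightarrow> nat \<Rightarrow> nat \<Rightarrow> nat" where
  "f_bound m k l t n =
     (if m \<le> k - 1 then (l - t + 1) ^ (m - t) * (m choose t) * S2 (n - m) (k - m)
      else (l - t + 1) ^ (k - t) * (k choose t))"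

definition g_bound :: "nat \<Rightarrow> nat \<Rightarrow> nat \<Rightarrow> nat \<Rightarrow> nat \<Rightarrow> nat" where
  "g_bound m k l t n = max (f_bound m k l t n) (f_bound k k l t n)"

end

theory Submission
  imports Defs
begin

(* Fix a minimum t-cover T of FF and put m = tau_t(GG); every member of FF contains t blocks of T.
   A set S of fewer than m blocks of a member of FF is not a t-cover of GG, so some G in GG meets
   S in fewer than t blocks, and then every member of FF containing S also contains one of any
   l - t + 1 blocks of G outside S. Branching in this way from the t-subsets of T gives at most
   (tau_t(FF) choose t) (l - t + 1)^(m - t) sets of m blocks, one of which lies in each member
   of FF; and at most S(n - m, k - m) partitions in Pi(n, k) (just one if m = k) contain m given
   blocks. In the product with the symmetric bound for GG the two binomial coefficients swap
   places, giving f(tau_t(GG), k, l, t, n) f(tau_t(FF), l, k, t, n). *)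

definition partitions_into :: "'a set \<Rightarrow> nat \<Rightarrow> 'a set set set" where
  "partitions_into A K = {P. partition_on A P \<and> card P = K}"

lemma Pi_nk_eq_partitions_into: "Pi_nk n k = partitions_into {1..n} k"
  by (simp add: Pi_nk_def partitions_into_def)

lemma finite_partitions_into: "finite A \<Longrightarrow> finite (partitions_into A K)"
  unfolding partitions_into_def
  by (rule finite_subset[OF _ finitely_many_partition_on]) auto

lemma partition_on_pullback:
  assumes P: "partition_on A P" and surj: "h ` B = A"
  shows "partition_on B ((\<lambda>p. B \<inter> h -` p) ` P)"
proof (rule partition_onI)
  have "\<Union> ((\<lambda>p. B \<inter> h -` p) ` P) = B \<inter> h -` \<Union>P" by blast
  then show "\<Union> ((\<lambda>p. B \<inter> h -` p) ` P) = B" using partition_onD1[OF P] surj by blast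
  show "disjnt p q"
    if pq: "p \<in> (\<lambda>p. B \<inter> h -` p) ` P" "q \<in> (\<lambda>p. B \<inter> h -` p) ` P" "p \<noteq> q" for p q
  proof -
    obtain p' q' where "p' \<in> P" "q' \<in> P" "p = B \<inter> h -` p'" "q = B \<inter> h -` q'"
      using pq(1,2) by blast
    moreover from calculation have "p' \<noteq> q'" using pq(3) by blast
    ultimately have "p' \<inter> q' = {}" by (metis disjointD partition_onD2[OF P])
    then show ?thesis using \<open>p = _\<close> \<open>q = _\<close> by (auto simp: disjnt_def)
  qed
  show "{} \<notin> (\<lambda>p. B \<inter> h -` p) ` P"
  proof
    assume "{} \<in> (\<lambda>p. B \<inter> h -` p) ` P"
    then obtain p where "p \<in> P" "B \<inter> h -` p = {}" by auto
    moreover have "p \<subseteq> h ` B" using \<open>p \<in> P\<close> partition_onD1[OF P] surj by blast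
    then have "h ` (B \<inter> h -` p) = p" by auto
    ultimately show False using partition_onD3[OF P] by auto
  qed
qed

lemma card_partitions_into_le_surj:
  assumes "finite B" and surj: "h ` B = A"
  shows "card (partitions_into A K) \<le> card (partitions_into B K)"
proof -
  let ?pull = "\<lambda>P. (\<lambda>p. B \<inter> h -` p) ` P"
  have push_pull: "(`) h ` ?pull P = P" and pull: "?pull P \<in> partitions_into B K"
    if "P \<in> partitions_into A K" for P
  proof -
    have P: "partition_on A P" "card P = K" using that by (auto simp: partitions_into_def)
    have push_pull_block: "h ` (B \<inter> h -` p) = p" if "p \<in> P" for p
    proof -
      have "p \<subseteq> h ` B" using that partition_onD1[OF P(1)] surj by blast
      then show ?thesis by auto
    qed
    then show "(`) h ` ?pull P = P" by (simp add: image_image)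
    have "inj_on (\<lambda>p. B \<inter> h -` p) P"
      using push_pull_block by (metis inj_on_inverseI)
    then show "?pull P \<in> partitions_into B K"
      using partition_on_pullback[OF P(1) surj] P(2) by (simp add: partitions_into_def card_image)
  qed
  show ?thesis
  proof (rule card_inj_on_le)
    show "inj_on ?pull (partitions_into A K)"
      by (rule inj_on_inverseI[where g="(`) ((`) h)"]) (rule push_pull)
    show "?pull ` partitions_into A K \<subseteq> partitions_into B K" using pull by blast
    show "finite (partitions_into B K)" using \<open>finite B\<close> by (rule finite_partitions_into)
  qed
qed

lemma card_partitions_into_mono:
  assumes "finite A" "finite B" "card A \<le> card B" "0 < K"
  shows "card (partitions_into A K) \<le> card (partitions_into B K)"
proof (cases "A = {}")
  case True
  then have "partitions_into A K = {}"
    using \<open>0 < K\<close> by (auto simp: partitions_into_def partition_on_empty)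
  then show ?thesis by simp
next
  case False
  then obtain a where "a \<in> A" by blast
  obtain f where f: "inj_on f A" "f ` A \<subseteq> B" using card_le_inj assms(1-3) by blast
  define h where "h b = (if b \<in> f ` A then inv_into A f b else a)" for b
  have "h ` B = A"
  proof
    show "h ` B \<subseteq> A" using \<open>a \<in> A\<close> by (auto simp: h_def inv_into_into)
    show "A \<subseteq> h ` B"
    proof
      fix x assume "x \<in> A"
      then have "h (f x) = x" using f(1) by (simp add: h_def)
      then show "x \<in> h ` B" using f(2) \<open>x \<in> A\<close> by (metis image_subset_iff rev_image_eqI)
    qed
  qed
  with \<open>finite B\<close> show ?thesis by (rule card_partitions_into_le_surj)
qed

lemma partition_on_Diff_blocks:
  assumes P: "partition_on A P" and "S \<subseteq> P"
  shows "partition_on (A - \<Union>S) (P - S)"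
proof (rule partition_onI)
  have disj: "p \<inter> q = {}" if "p \<in> P" "q \<in> P" "p \<noteq> q" for p q
    using disjointD[OF partition_onD2[OF P] that] .
  show "\<Union> (P - S) = A - \<Union>S"
  proof
    show "\<Union> (P - S) \<subseteq> A - \<Union>S"
      using partition_onD1[OF P] disj \<open>S \<subseteq> P\<close> by blast
    show "A - \<Union>S \<subseteq> \<Union> (P - S)"
      using partition_onD1[OF P] by blast
  qed
  show "disjnt p q" if "p \<in> P - S" "q \<in> P - S" "p \<noteq> q" for p q
    using disj that by (simp add: disjnt_def)
  show "{} \<notin> P - S" using partition_onD3[OF P] by blast
qed

lemma card_le_card_Union_disjoint:
  assumes "disjoint S" "{} \<notin> S" "finite (\<Union>S)"
  shows "card S \<le> card (\<Union>S)"
proof -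
  have fin: "finite S" "\<And>B. B \<in> S \<Longrightarrow> finite B"
    using assms(3) by (auto simp: finite_UnionD intro: finite_subset)
  have "card S = (\<Sum>B\<in>S. 1)" by simp
  also have "\<dots> \<le> (\<Sum>B\<in>S. card B)"
    using fin(2) assms(2) by (intro sum_mono) (metis card_0_eq less_one not_le)
  also have "\<dots> = card (\<Union>S)"
    using card_Union_disjoint[OF assms(1)] fin(2) by simp
  finally show ?thesis .
qed

lemma card_supersets_le_card_partitions_into:
  assumes "finite A" and P0: "P0 \<in> partitions_into A k" "S \<subseteq> P0"
  shows "card {P \<in> partitions_into A k. S \<subseteq> P} \<le> card (partitions_into (A - \<Union>S) (k - card S))"
proof (rule card_inj_on_le)
  have "finite S"
    using P0 finite_elements[OF \<open>finite A\<close>] finite_subset by (auto simp: partitions_into_def)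
  show "inj_on (\<lambda>P. P - S) {P \<in> partitions_into A k. S \<subseteq> P}"
    by (rule inj_onI) (metis (no_types, lifting) Diff_partition mem_Collect_eq)
  show "(\<lambda>P. P - S) ` {P \<in> partitions_into A k. S \<subseteq> P} \<subseteq> partitions_into (A - \<Union>S) (k - card S)"
    using partition_on_Diff_blocks card_Diff_subset[OF \<open>finite S\<close>]
    by (auto simp: partitions_into_def)
  show "finite (partitions_into (A - \<Union>S) (k - card S))"
    using \<open>finite A\<close> by (simp add: finite_partitions_into)
qed

definition completion_bound :: "nat \<Rightarrow> nat \<Rightarrow> nat \<Rightarrow> nat" where
  "completion_bound n k m = (if m < k then S2 (n - m) (k - m) else 1)"

lemma card_Pi_nk_supersets_le:
  "card {P \<in> Pi_nk n k. S \<subseteq> P} \<le> completion_bound n k (card S)"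
proof (cases "{P \<in> Pi_nk n k. S \<subseteq> P} = {}")
  case True
  then show ?thesis by (metis card.empty le0)
next
  case False
  then obtain P0 where P0: "P0 \<in> partitions_into {1..n} k" "S \<subseteq> P0"
    by (auto simp: Pi_nk_eq_partitions_into)
  have part: "partition_on {1..n} P0" "card P0 = k" using P0(1) by (auto simp: partitions_into_def)
  show ?thesis
  proof (cases "card S < k")
    case True
    have "card S \<le> card (\<Union>S)"
      using partition_onD1[OF part(1)] partition_onD3[OF part(1)] P0(2)
        pairwise_subset[OF partition_onD2[OF part(1)] P0(2)]
      by (intro card_le_card_Union_disjoint) (auto intro: finite_subset)
    moreover have "\<Union>S \<subseteq> {1..n}" using partition_onD1[OF part(1)] P0(2) by blast
    ultimately have card_rest: "card ({1..n} - \<Union>S) \<le> card {1..n - card S}"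
      by (simp add: card_Diff_subset finite_subset)
    have "card (partitions_into ({1..n} - \<Union>S) (k - card S)) \<le> S2 (n - card S) (k - card S)"
      unfolding S2_def Pi_nk_eq_partitions_into
      by (rule card_partitions_into_mono) (use True card_rest in auto)
    then show ?thesis
      using card_supersets_le_card_partitions_into[OF _ P0] True
      by (simp add: completion_bound_def Pi_nk_eq_partitions_into)
  next
    case False
    have "P = S" if "P \<in> Pi_nk n k" "S \<subseteq> P" for P
    proof -
      have "partition_on {1..n} P" "card P = k" using that(1) by (auto simp: Pi_nk_def)
      then have "finite P" "card P \<le> card S" using False finite_elements by auto
      then show "P = S" using card_seteq that(2) by blast
    qed
    then have "card {P \<in> Pi_nk n k. S \<subseteq> P} \<le> card {S}" by (intro card_mono) auto
    then show ?thesis using False by (simp add: completion_bound_def)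
  qed
qed

lemma tau_le: "is_t_cover n t PP T \<Longrightarrow> tau n t PP \<le> card T"
  unfolding tau_def by (rule Least_le) blast

lemma obtain_minimum_t_cover:
  assumes "is_t_cover n t PP T"
  obtains T' where "is_t_cover n t PP T'" "card T' = tau n t PP"
  using LeastI[of "\<lambda>m. \<exists>T. is_t_cover n t PP T \<and> card T = m" "card T"] assms
  unfolding tau_def by blast

lemma cross_t_intersecting_commute:
  "cross_t_intersecting t FF GG \<longleftrightarrow> cross_t_intersecting t GG FF"
  unfolding cross_t_intersecting_def by (metis Int_commute)

lemma is_t_cover_subset_iff:
  assumes "P \<in> Pi_nk n k" "S \<subseteq> P"
  shows "is_t_cover n t PP S \<longleftrightarrow> (\<forall>Q\<in>PP. t \<le> card (S \<inter> Q))"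
proof -
  have P: "partition_on {1..n} P" using assms(1) by (simp add: Pi_nk_def)
  have "finite S" using finite_elements[OF _ P] assms(2) finite_subset by blast
  moreover have "disjoint S" using pairwise_subset[OF partition_onD2[OF P] assms(2)] .
  moreover have "{} \<notin> S" "\<Union>S \<subseteq> {1..n}" using P assms(2) by (auto simp: partition_on_def)
  ultimately show ?thesis by (auto simp: is_t_cover_def is_partition_def)
qed

lemma is_t_cover_of_cross_member:
  assumes "G \<in> Pi_nk n l" "G \<in> GG" "cross_t_intersecting t FF GG"
  shows "is_t_cover n t FF G"
  using is_t_cover_subset_iff[OF assms(1) subset_refl] assms(2,3)
  unfolding cross_t_intersecting_def by (simp add: Int_commute)

lemma tau_cross_bounds:
  assumes "FF \<subseteq> Pi_nk n k" "FF \<noteq> {}" "GG \<noteq> {}" "cross_t_intersecting t FF GG"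
  shows "t \<le> tau n t GG" "tau n t GG \<le> k"
proof -
  obtain F where F: "F \<in> FF" "F \<in> Pi_nk n k" using assms(1,2) by blast
  have cover: "is_t_cover n t GG F"
    using is_t_cover_of_cross_member F assms(4) cross_t_intersecting_commute by blast
  then show "tau n t GG \<le> k" using tau_le F(2) by (fastforce simp: Pi_nk_def)
  obtain T where T: "is_t_cover n t GG T" "card T = tau n t GG"
    using obtain_minimum_t_cover[OF cover] .
  obtain G where "G \<in> GG" using assms(3) by blast
  then have "t \<le> card (T \<inter> G)" using T(1) by (simp add: is_t_cover_def)
  also have "\<dots> \<le> card T" using T(1) by (intro card_mono) (auto simp: is_t_cover_def is_partition_def)
  finally show "t \<le> tau n t GG" using T(2) by simp
qed

lemma obtain_hitting_subset:
  fixes G S :: "'a set"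
  assumes "finite G" "card G = l" "card (S \<inter> G) < t" "t \<le> l"
  obtains E where "E \<subseteq> G - S" "card E = l - t + 1" "\<And>F. t \<le> card (F \<inter> G) \<Longrightarrow> F \<inter> E \<noteq> {}"
proof -
  have card_outside: "card (G - S) = l - card (S \<inter> G)"
    using assms(1,2) card_Diff_subset_Int[of G S] by (simp add: Int_commute)
  with assms(3,4) have "l - t + 1 \<le> card (G - S)" by linarith
  then obtain E where E: "E \<subseteq> G - S" "card E = l - t + 1"
    by (meson obtain_subset_with_card_n)
  have "F \<inter> E \<noteq> {}" if F: "t \<le> card (F \<inter> G)" for F
    \<comment> \<open>avoiding E, F meets G in at most (card (G - S) - card E) + card (S \<inter> G) = t - 1 blocks\<close>
  proof
    assume "F \<inter> E = {}"
    then have "F \<inter> G \<subseteq> (G - S - E) \<union> (S \<inter> G)" by blast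
    then have "card (F \<inter> G) \<le> card (G - S - E) + card (S \<inter> G)"
      using assms(1) by (meson card_Un_le card_mono finite_Diff finite_Int finite_UnI le_trans)
    also have "card (G - S - E) = card (G - S) - card E"
      using E(1) assms(1) by (meson card_Diff_subset finite_Diff finite_subset)
    finally show False using F card_outside E(2) assms(3,4) by linarith
  qed
  with E show ?thesis using that by blast
qed

lemma exists_small_hitting_set:
  assumes FF: "FF \<subseteq> Pi_nk n k" and GG: "GG \<subseteq> Pi_nk n l"
    and cross: "cross_t_intersecting t FF GG" and "t \<le> l" and "card S < tau n t GG"
  shows "\<exists>E. finite E \<and> card E \<le> l - t + 1 \<and> E \<inter> S = {} \<and> (\<forall>F\<in>FF. S \<subseteq> F \<longrightarrow> F \<inter> E \<noteq> {})"
proof (cases "\<exists>F\<in>FF. S \<subseteq> F")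
  case True
  then obtain F where F: "F \<in> Pi_nk n k" "S \<subseteq> F" using FF by blast
  have "\<not> is_t_cover n t GG S"
  proof
    assume "is_t_cover n t GG S"
    then have "tau n t GG \<le> card S" by (rule tau_le)
    with assms(5) show False by simp
  qed
  then obtain G where G: "G \<in> GG" "card (S \<inter> G) < t"
    using is_t_cover_subset_iff[OF F] by (auto simp: not_le)
  have "finite G" "card G = l"
    using G(1) GG finite_elements[of "{1..n}" G] by (auto simp: Pi_nk_def)
  then obtain E where E: "E \<subseteq> G - S" "card E = l - t + 1"
    "\<And>F. t \<le> card (F \<inter> G) \<Longrightarrow> F \<inter> E \<noteq> {}"
    using G(2) \<open>t \<le> l\<close> by (rule obtain_hitting_subset) blast
  have "finite E" using E(1) \<open>finite G\<close> finite_subset by blast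
  moreover have "\<forall>F\<in>FF. F \<inter> E \<noteq> {}"
    using E(3) cross G(1) unfolding cross_t_intersecting_def by blast
  ultimately show ?thesis using E(1,2) by (intro exI[of _ E]) auto
next
  case False
  then show ?thesis by (intro exI[of _ "{}"]) auto
qed

definition upward_generating :: "nat \<Rightarrow> 'a set set \<Rightarrow> 'a set set \<Rightarrow> bool" where
  "upward_generating j \<Lambda> FF \<longleftrightarrow>
     finite \<Lambda> \<and> (\<forall>S\<in>\<Lambda>. finite S \<and> card S = j) \<and> (\<forall>F\<in>FF. \<exists>S\<in>\<Lambda>. S \<subseteq> F)"

lemma upward_generating_t_subsets_of_cover:
  assumes "is_t_cover n t FF T"
  shows "upward_generating t {S. S \<subseteq> T \<and> card S = t} FF"
proof -
  have "finite T" using assms by (simp add: is_t_cover_def is_partition_def)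
  moreover have "\<exists>S\<in>{S. S \<subseteq> T \<and> card S = t}. S \<subseteq> F" if "F \<in> FF" for F
  proof -
    have "t \<le> card (T \<inter> F)" using assms that by (simp add: is_t_cover_def)
    then obtain S where "S \<subseteq> T \<inter> F" "card S = t" by (meson obtain_subset_with_card_n)
    then show ?thesis by blast
  qed
  ultimately show ?thesis by (auto simp: upward_generating_def intro: finite_subset)
qed

lemma upward_generating_branching_step:
  assumes FF: "FF \<subseteq> Pi_nk n k" and GG: "GG \<subseteq> Pi_nk n l"
    and cross: "cross_t_intersecting t FF GG" and "t \<le> l" and "j < tau n t GG"
    and \<Lambda>: "upward_generating j \<Lambda> FF"
  shows "\<exists>\<Lambda>'. upward_generating (Suc j) \<Lambda>' FF \<and> card \<Lambda>' \<le> card \<Lambda> * (l - t + 1)"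
proof -
  have "\<forall>S\<in>\<Lambda>. \<exists>E. finite E \<and> card E \<le> l - t + 1 \<and> E \<inter> S = {}
          \<and> (\<forall>F\<in>FF. S \<subseteq> F \<longrightarrow> F \<inter> E \<noteq> {})"
    using exists_small_hitting_set[OF FF GG cross \<open>t \<le> l\<close>] \<Lambda> \<open>j < tau n t GG\<close>
    by (simp add: upward_generating_def)
  then obtain E where E: "\<And>S. S \<in> \<Lambda> \<Longrightarrow> finite (E S) \<and> card (E S) \<le> l - t + 1
      \<and> E S \<inter> S = {} \<and> (\<forall>F\<in>FF. S \<subseteq> F \<longrightarrow> F \<inter> E S \<noteq> {})"
    by metis
  define \<Lambda>' where "\<Lambda>' = (\<Union>S\<in>\<Lambda>. (\<lambda>e. insert e S) ` E S)"
  have "finite \<Lambda>" using \<Lambda> by (simp add: upward_generating_def)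
  then have "card \<Lambda>' \<le> (\<Sum>S\<in>\<Lambda>. card ((\<lambda>e. insert e S) ` E S))"
    unfolding \<Lambda>'_def by (rule card_UN_le)
  also have "\<dots> \<le> (\<Sum>S\<in>\<Lambda>. l - t + 1)"
  proof (rule sum_mono)
    fix S assume "S \<in> \<Lambda>"
    then have "finite (E S)" "card (E S) \<le> l - t + 1" using E by auto
    then show "card ((\<lambda>e. insert e S) ` E S) \<le> l - t + 1" using card_image_le le_trans by blast
  qed
  finally have "card \<Lambda>' \<le> card \<Lambda> * (l - t + 1)" by simp
  moreover have "finite \<Lambda>'"
    unfolding \<Lambda>'_def using \<open>finite \<Lambda>\<close> E by (intro finite_UN_I finite_imageI) auto
  moreover have "\<forall>S'\<in>\<Lambda>'. finite S' \<and> card S' = Suc j"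
  proof -
    have "finite (insert e S) \<and> card (insert e S) = Suc j" if "S \<in> \<Lambda>" "e \<in> E S" for S e
    proof -
      have "e \<notin> S" "finite S" "card S = j"
        using \<Lambda> E[OF that(1)] that by (auto simp: upward_generating_def)
      then show ?thesis by simp
    qed
    then show ?thesis unfolding \<Lambda>'_def by auto
  qed
  moreover have "\<exists>S'\<in>\<Lambda>'. S' \<subseteq> F" if "F \<in> FF" for F
  proof -
    obtain S where S: "S \<in> \<Lambda>" "S \<subseteq> F" using \<Lambda> \<open>F \<in> FF\<close> by (auto simp: upward_generating_def)
    then obtain e where "e \<in> E S" "e \<in> F" using E \<open>F \<in> FF\<close> by blast
    then show ?thesis using S unfolding \<Lambda>'_def by blast
  qed
  ultimately show ?thesis unfolding upward_generating_def by blast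
qed

lemma upward_generating_branching:
  assumes FF: "FF \<subseteq> Pi_nk n k" and GG: "GG \<subseteq> Pi_nk n l"
    and cross: "cross_t_intersecting t FF GG" and T: "is_t_cover n t FF T"
    and "t \<le> l" and "t \<le> j" "j \<le> tau n t GG"
  shows "\<exists>\<Lambda>. upward_generating j \<Lambda> FF \<and> card \<Lambda> \<le> (card T choose t) * (l - t + 1) ^ (j - t)"
  using \<open>t \<le> j\<close> \<open>j \<le> tau n t GG\<close>
proof (induction j rule: dec_induct)
  case base
  have "card {S. S \<subseteq> T \<and> card S = t} = card T choose t"
    using T by (intro n_subsets) (simp add: is_t_cover_def is_partition_def)
  with upward_generating_t_subsets_of_cover[OF T] show ?case
    by (intro exI[of _ "{S. S \<subseteq> T \<and> card S = t}"]) simp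
next
  case (step j)
  then obtain \<Lambda> where "upward_generating j \<Lambda> FF"
    and card_\<Lambda>: "card \<Lambda> \<le> (card T choose t) * (l - t + 1) ^ (j - t)"
    by auto
  have "j < tau n t GG" using step.prems by simp
  from upward_generating_branching_step[OF FF GG cross \<open>t \<le> l\<close> this \<open>upward_generating j \<Lambda> FF\<close>]
  obtain \<Lambda>' where "upward_generating (Suc j) \<Lambda>' FF" "card \<Lambda>' \<le> card \<Lambda> * (l - t + 1)"
    by blast
  moreover have "card \<Lambda> * (l - t + 1) \<le> (card T choose t) * (l - t + 1) ^ (j - t) * (l - t + 1)"
    using card_\<Lambda> by (rule mult_right_mono) simp
  moreover have "\<dots> = (card T choose t) * (l - t + 1) ^ (Suc j - t)"
    using \<open>t \<le> j\<close> by (simp add: Suc_diff_le algebra_simps)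
  ultimately show ?case by (metis le_trans)
qed

lemma finite_Pi_nk: "finite (Pi_nk n k)"
  unfolding Pi_nk_eq_partitions_into by (simp add: finite_partitions_into)

lemma card_le_card_times_completion_bound:
  assumes "FF \<subseteq> Pi_nk n k" "upward_generating j \<Lambda> FF"
  shows "card FF \<le> card \<Lambda> * completion_bound n k j"
proof -
  have \<Lambda>: "finite \<Lambda>" "\<forall>S\<in>\<Lambda>. card S = j" "\<forall>F\<in>FF. \<exists>S\<in>\<Lambda>. S \<subseteq> F"
    using assms(2) by (auto simp: upward_generating_def)
  have "FF \<subseteq> (\<Union>S\<in>\<Lambda>. {P \<in> Pi_nk n k. S \<subseteq> P})" using assms(1) \<Lambda>(3) by blast
  then have "card FF \<le> card (\<Union>S\<in>\<Lambda>. {P \<in> Pi_nk n k. S \<subseteq> P})"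
    using finite_Pi_nk \<Lambda>(1) by (intro card_mono) auto
  also have "\<dots> \<le> (\<Sum>S\<in>\<Lambda>. card {P \<in> Pi_nk n k. S \<subseteq> P})"
    using \<Lambda>(1) by (rule card_UN_le)
  also have "\<dots> \<le> (\<Sum>S\<in>\<Lambda>. completion_bound n k j)"
  proof (rule sum_mono)
    fix S assume "S \<in> \<Lambda>"
    then show "card {P \<in> Pi_nk n k. S \<subseteq> P} \<le> completion_bound n k j"
      using card_Pi_nk_supersets_le[of n k S] \<Lambda>(2) by simp
  qed
  finally show ?thesis by simp
qed

lemma card_cross_family_le:
  assumes FF: "FF \<subseteq> Pi_nk n k" and GG: "GG \<subseteq> Pi_nk n l"
    and cross: "cross_t_intersecting t FF GG" and "FF \<noteq> {}" "GG \<noteq> {}" and "t \<le> l"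
  shows "card FF \<le> (tau n t FF choose t) * (l - t + 1) ^ (tau n t GG - t)
                    * completion_bound n k (tau n t GG)"
proof -
  obtain G where "G \<in> GG" using \<open>GG \<noteq> {}\<close> by blast
  with GG have "is_t_cover n t FF G" using cross by (intro is_t_cover_of_cross_member) auto
  then obtain T where T: "is_t_cover n t FF T" "card T = tau n t FF"
    by (rule obtain_minimum_t_cover)
  have "t \<le> tau n t GG" by (rule tau_cross_bounds(1)[OF FF \<open>FF \<noteq> {}\<close> \<open>GG \<noteq> {}\<close> cross])
  from upward_generating_branching[OF FF GG cross T(1) \<open>t \<le> l\<close> this order_refl]
  obtain \<Lambda> where \<Lambda>: "upward_generating (tau n t GG) \<Lambda> FF"
    "card \<Lambda> \<le> (tau n t FF choose t) * (l - t + 1) ^ (tau n t GG - t)"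
    unfolding T(2) by blast
  have "card FF \<le> card \<Lambda> * completion_bound n k (tau n t GG)"
    by (rule card_le_card_times_completion_bound[OF FF \<Lambda>(1)])
  also have "\<dots> \<le> (tau n t FF choose t) * (l - t + 1) ^ (tau n t GG - t)
                    * completion_bound n k (tau n t GG)"
    using \<Lambda>(2) by (rule mult_right_mono) simp
  finally show ?thesis .
qed

lemma f_bound_eq:
  assumes "0 < k" "m \<le> k"
  shows "f_bound m k l t n = (l - t + 1) ^ (m - t) * (m choose t) * completion_bound n k m"
  using assms by (cases "m < k") (auto simp: f_bound_def completion_bound_def)

theorem mainTheorem10:
  fixes n k l t :: nat and F G :: "nat set set set"
  assumes "k \<ge> t + 2" and "l \<ge> t + 2"
    and "real n \<ge> L (max k l) t"
    and "F \<subseteq> Pi_nk n k" and "G \<subseteq> Pi_nk n l"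
    and "F \<noteq> {}" and "G \<noteq> {}"
    and "cross_t_intersecting t F G"
  shows "card F * card G \<le> g_bound (tau n t G) k l t n * g_bound (tau n t F) l k t n"
proof -
  define m where "m = tau n t G"
  define p where "p = tau n t F"
  have cross': "cross_t_intersecting t G F"
    using assms(8) cross_t_intersecting_commute by blast
  have "m \<le> k" "p \<le> l"
    using tau_cross_bounds(2) assms(4-8) cross' unfolding m_def p_def by blast+
  have "card F \<le> (p choose t) * (l - t + 1) ^ (m - t) * completion_bound n k m"
    using card_cross_family_le[OF assms(4,5,8,6,7)] assms(2) unfolding m_def p_def by simp
  moreover have "card G \<le> (m choose t) * (k - t + 1) ^ (p - t) * completion_bound n l p"
    using card_cross_family_le[OF assms(5,4) cross' assms(7,6)] assms(1)
    unfolding m_def p_def by simp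
  ultimately have "card F * card G \<le> (p choose t) * (l - t + 1) ^ (m - t) * completion_bound n k m
      * ((m choose t) * (k - t + 1) ^ (p - t) * completion_bound n l p)"
    by (rule mult_le_mono)
  also have "\<dots> = ((l - t + 1) ^ (m - t) * (m choose t) * completion_bound n k m)
      * ((k - t + 1) ^ (p - t) * (p choose t) * completion_bound n l p)"
    by (simp only: ac_simps)
  also have "\<dots> = f_bound m k l t n * f_bound p l k t n"
    using f_bound_eq \<open>m \<le> k\<close> \<open>p \<le> l\<close> assms(1,2) by simp
  also have "\<dots> \<le> g_bound m k l t n * g_bound p l k t n"
    unfolding g_bound_def by (intro mult_le_mono) auto
  finally show ?thesis unfolding m_def p_def .
qed

end
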